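(* Let $X_1,\dots,X_n\subseteq\mathbb R^m$ ($2\le n\le m$) be smooth tropical hypersurfaces whose intersection is transversal. For nonempty $J\subseteq[n]=\{1,\dots,n\}$ let $U_J=\bigcup_{i\in J}X_i$, let $I=\bigcap_{i=1}^nX_i$ and $U=U_{[n]}$, and write $Z^{(0)}$ for the set of vertices ($0$-cells) of a polyhedral complex $Z$. Then, as disjoint unions (multisets), $$I^{(0)}\;\sqcup\bigsqcup_{|J|=n-1}U_J^{(0)}\;\sqcup\bigsqcup_{|J|=n-3}U_J^{(0)}\;\sqcup\cdots\;=\;U^{(0)}\;\sqcup\bigsqcup_{|J|=n-2}U_J^{(0)}\;\sqcup\bigsqcup_{|J|=n-4}U_J^{(0)}\;\sqcup\cdots,$$ where the unions range over subsets $J\subseteq[n]$ with $|J|\ge1$ of the indicated sizes. That is, for every point $p\in\mathbb R^m$, $$[p\in I^{(0)}]+\#\{J: 1\le|J|\le n-1,\ |J|\equiv n-1 \ (\mathrm{mod}\ 2),\ p\in U_J^{(0)}\}=[p\in U^{(0)}]+\#\{J:1\le|J|\le n-2,\ |J|\equiv n\ (\mathrm{mod}\ 2),\ p\in U_J^{(0)}\}.$$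
   Context: Over $(\mathbb R,\max,+)$, a tropical polynomial is $f(x)=\max_{a\in\mathcal A}\{\lambda_a+a\cdot x\}$, $\mathcal A\subseteq\mathbb Z^{m}$ finite, $\lambda_a\in\mathbb R$; Newton polytope $\Delta_f=\operatorname{conv}(\mathcal A)$; lifted polytope $\tilde\Delta_f=\operatorname{conv}\{(a,t):a\in\mathcal A,t\le\lambda_a\}$, whose bounded faces project to a regular lattice subdivision $\operatorname{Subdiv}(f)$ of $\Delta_f$. $V_{tr}(f)$ is the non-linear locus of $f$, a polyhedral complex of pure dimension $m-1$, with a bijection $C\mapsto C^\vee$ from $k$-cells of $V_{tr}(f)$ to $(m-k)$-cells of $\operatorname{Subdiv}(f)$, $C^\vee=\operatorname{conv}\{a:\lambda_a+a\cdot x=f(x)\}$ for $x$ in the relative interior of $C$. $V_{tr}(f)$ is smooth if every maximal cell of $\operatorname{Subdiv}(f)$ is a lattice simplex of volume $1/m!$. For $X_i=V_{tr}(f_i)$, the union $U_J=\bigcup_{i\in J}X_i$ is the tropical hypersurface $V_{tr}(\bigodot_{i\in J}f_i)$ (the product polynomial has function $\sum_{i\in J}f_i$), with its polyhedral complex structure and subdivision $\operatorname{Subdiv}_{U_J}=\operatorname{Subdiv}(\bigodot_{i\in J}f_i)$; each cell of it has a privileged representation as a Minkowski sum $\sum_{i\in J}\Lambda_i$, $\Lambda_i\in\operatorname{Subdiv}(f_i)$, obtained by uniquely decomposing the corresponding bounded face of $\tilde\Delta_{\bigodot f_i}=\sum\tilde\Delta_{f_i}$. Each cell $C$ of $I_J=\bigcap_{i\in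 J}X_i$ is uniquely $\bigcap_{i\in J}C_i$ with $C_i$ a cell of $X_i$ containing $C$ in its relative interior, and its dual $C^\vee\in\operatorname{Subdiv}_{U_J}$ has privileged representation $\sum_{i\in J}C_i^\vee$. The intersection $X_1\cap\dots\cap X_n$ is transversal if for every $J\subseteq[n]$ with $|J|\ge2$, $I_J$ has dimension $m-|J|$ and every cell $C$ of $I_J$ satisfies $\dim C^\vee=\sum_{i\in J}\dim C_i^\vee$. *)

theory Defs
  imports "HOL-Analysis.Analysis" "HOL-Library.FuncSet"
begin

text \<open>A tropical polynomial in m variables (m = CARD('m)) is a pair (A, lam): a finite
nonempty set A of integer exponent vectors and coefficients lam a for a in A.\<close>

type_synonym 'm trop = "(real^'m) set \<times> (real^'m \<Rightarrow> real)"

definition is_trop :: "'m::finite trop \<Rightarrow> bool" where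
  "is_trop P \<longleftrightarrow> finite (fst P) \<and> fst P \<noteq> {} \<and> (\<forall>a\<in>fst P. \<forall>i. a $ i \<in> \<int>)"

definition teval :: "'m::finite trop \<Rightarrow> real^'m \<Rightarrow> real" where
  "teval P x = Max ((\<lambda>a. snd P a + a \<bullet> x) ` fst P)"

definition active :: "'m::finite trop \<Rightarrow> real^'m \<Rightarrow> (real^'m) set" where
  "active P x = {a \<in> fst P. snd P a + a \<bullet> x = teval P x}"

definition Vtr :: "'m::finite trop \<Rightarrow> (real^'m) set" where
  "Vtr P = {x. \<not> (\<exists>e>0. \<exists>c v. \<forall>y\<in>ball x e. teval P y = c + v \<bullet> y)}"

text \<open>Cells of Subdiv(f): projections conv{a : lam a + a.x = f x} of the bounded faces
of the lifted polytope.\<close>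
definition subdiv_cells :: "'m::finite trop \<Rightarrow> (real^'m) set set" where
  "subdiv_cells P = {convex hull (active P x) | x. True}"

definition lattice_simplex :: "(real^'m::finite) set \<Rightarrow> bool" where
  "lattice_simplex \<sigma> \<longleftrightarrow> (\<exists>S. finite S \<and> card S = CARD('m) + 1 \<and> \<not> affine_dependent S
       \<and> (\<forall>a\<in>S. \<forall>i. a $ i \<in> \<int>) \<and> \<sigma> = convex hull S)"

definition smooth_trop :: "'m::finite trop \<Rightarrow> bool" where
  "smooth_trop P \<longleftrightarrow> (\<forall>\<sigma>\<in>subdiv_cells P. (\<not> (\<exists>\<tau>\<in>subdiv_cells P. \<sigma> \<subset> \<tau>)) \<longrightarrow>
       lattice_simplex \<sigma> \<and> measure lborel \<sigma> = 1 / fact CARD('m))"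

text \<open>The cell of V_tr(f) having p in its relative interior (dual to conv(active P p)).\<close>
definition cell_of :: "'m::finite trop \<Rightarrow> real^'m \<Rightarrow> (real^'m) set" where
  "cell_of P p = {y. active P p \<subseteq> active P y}"

definition hyp_cells :: "'m::finite trop \<Rightarrow> (real^'m) set set" where
  "hyp_cells P = {cell_of P p | p. p \<in> Vtr P}"

definition int_cells :: "(nat \<Rightarrow> 'm::finite trop) \<Rightarrow> nat set \<Rightarrow> (real^'m) set set" where
  "int_cells F J = {(\<Inter>i\<in>J. cell_of (F i) p) | p. p \<in> (\<Inter>i\<in>J. Vtr (F i))}"

definition vertices_of :: "'a set set \<Rightarrow> 'a set" where
  "vertices_of cells = {p. {p} \<in> cells}"

definition tprod :: "(nat \<Rightarrow> 'm::finite trop) \<Rightarrow> nat set \<Rightarrow> 'm trop" where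
  "tprod F J = ((\<lambda>a. \<Sum>i\<in>J. a i) ` (\<Pi>\<^sub>E i\<in>J. fst (F i)),
      (\<lambda>b. Max ((\<lambda>a. \<Sum>i\<in>J. snd (F i) (a i)) `
              {a \<in> (\<Pi>\<^sub>E i\<in>J. fst (F i)). (\<Sum>i\<in>J. a i) = b})))"

text \<open>Transversality of X_1,...,X_n (X_i = V_tr(F i)): for every J with |J| \<ge> 2,
I_J has dimension m - |J| and every cell C of I_J satisfies
dim C^\<or> = sum of dim C_i^\<or>. For p in the relative interior of C,
C^\<or> = conv(active (tprod F J) p) and C_i^\<or> = conv(active (F i) p).\<close>
definition transversal :: "(nat \<Rightarrow> 'm::finite trop) \<Rightarrow> nat \<Rightarrow> bool" where
  "transversal F n \<longleftrightarrow> (\<forall>J. J \<subseteq> {1..n} \<and> card J \<ge> 2 \<longrightarrow>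
      ((\<exists>C\<in>int_cells F J. aff_dim C = int CARD('m) - int (card J)) \<and>
       (\<forall>C\<in>int_cells F J. aff_dim C \<le> int CARD('m) - int (card J))) \<and>
      (\<forall>p\<in>(\<Inter>i\<in>J. Vtr (F i)).
          aff_dim (convex hull (active (tprod F J) p))
            = (\<Sum>i\<in>J. aff_dim (convex hull (active (F i) p)))))"

end

theory Submission
  imports Defs
begin

text \<open>Fix \<open>p\<close> and let \<open>d\<^sub>i\<close> be the dimension of the dual cell of \<open>X\<^sub>i\<close> at \<open>p\<close>, so that
  \<open>d\<^sub>i \<ge> 1\<close> exactly when \<open>p \<in> X\<^sub>i\<close>. The dual cell of \<open>U\<^sub>J\<close> at \<open>p\<close> is the Minkowski sum of those
  of the \<open>X\<^sub>i\<close>, \<open>i \<in> J\<close>; factors with \<open>d\<^sub>i = 0\<close> merely translate it, and transversality makes the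
  dimensions of the others add up. So \<open>p\<close> is a vertex of \<open>U\<^sub>J\<close> iff the \<open>d\<^sub>i\<close>, \<open>i \<in> J\<close>, sum to \<open>m\<close>;
  as all the \<open>d\<^sub>i\<close> sum to at most \<open>m\<close>, this happens iff they sum to exactly \<open>m\<close> and \<open>J\<close> contains
  \<open>S = {i. p \<in> X\<^sub>i}\<close>, and \<open>p\<close> is a vertex of \<open>I\<close> iff moreover \<open>S = [n]\<close>. Both sides of the identity
  then count the supersets of \<open>S\<close> in \<open>[n]\<close> by parity, and toggling an index outside \<open>S\<close> matches
  the two parities.\<close>

text \<open>The dimension of the dual cell \<open>C\<^sup>\<or>\<close> of the cell \<open>C\<close> of \<open>V\<^sub>t\<^sub>r(P)\<close> having \<open>p\<close> in
  its relative interior.\<close>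
abbreviation dual_dim :: "'m::finite trop \<Rightarrow> real^'m \<Rightarrow> int" where
  "dual_dim P p \<equiv> aff_dim (convex hull (active P p))"

lemma teval_ge:
  assumes "finite (fst P)" "a \<in> fst P"
  shows "snd P a + a \<bullet> y \<le> teval P y"
  unfolding teval_def using assms by (intro Max_ge) auto

lemma teval_attained:
  assumes "finite (fst P)" "fst P \<noteq> {}"
  obtains a where "a \<in> fst P" "teval P y = snd P a + a \<bullet> y"
proof -
  have "teval P y \<in> (\<lambda>a. snd P a + a \<bullet> y) ` fst P"
    unfolding teval_def using assms by (intro Max_in) auto
  then show ?thesis using that by blast
qed

lemma active_nonempty:
  assumes "finite (fst P)" "fst P \<noteq> {}"
  shows "active P y \<noteq> {}"
proof -
  obtain a where "a \<in> fst P" "teval P y = snd P a + a \<bullet> y"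
    using teval_attained[OF assms] .
  then show ?thesis unfolding active_def by auto
qed

lemma self_in_cell_of [simp]: "p \<in> cell_of P p"
  unfolding cell_of_def by simp

text \<open>Inactive monomials stay strictly below an active one near \<open>p\<close>.\<close>
lemma eventually_active_subset:
  assumes fin: "finite (fst P)" and ne: "fst P \<noteq> {}"
  shows "eventually (\<lambda>y. active P y \<subseteq> active P p) (nhds p)"
proof -
  obtain a0 where a0: "a0 \<in> active P p" using active_nonempty[OF fin ne] by blast
  then have a0P: "a0 \<in> fst P" unfolding active_def by simp
  have below: "eventually (\<lambda>y. snd P b + b \<bullet> y < snd P a0 + a0 \<bullet> y) (nhds p)"
    if "b \<in> fst P - active P p" for b
  proof -
    have lt: "(snd P b + b \<bullet> p) - (snd P a0 + a0 \<bullet> p) < 0"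
      using that a0 teval_ge[OF fin, of b p] unfolding active_def by auto
    have "((\<lambda>y. (snd P b + b \<bullet> y) - (snd P a0 + a0 \<bullet> y))
        \<longlongrightarrow> (snd P b + b \<bullet> p) - (snd P a0 + a0 \<bullet> p)) (nhds p)"
      by (intro tendsto_intros) (simp_all add: filterlim_ident)
    from order_tendstoD(2)[OF this lt] show ?thesis
      by (rule eventually_mono) simp
  qed
  have "eventually (\<lambda>y. \<forall>b\<in>fst P - active P p. snd P b + b \<bullet> y < snd P a0 + a0 \<bullet> y) (nhds p)"
    using fin below by (intro eventually_ball_finite) auto
  then show ?thesis
  proof (rule eventually_mono)
    fix y
    assume below_a0: "\<forall>b\<in>fst P - active P p. snd P b + b \<bullet> y < snd P a0 + a0 \<bullet> y"
    show "active P y \<subseteq> active P p"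
    proof
      fix b assume b: "b \<in> active P y"
      show "b \<in> active P p"
      proof (rule ccontr)
        assume "b \<notin> active P p"
        with b below_a0 have "snd P b + b \<bullet> y < snd P a0 + a0 \<bullet> y"
          unfolding active_def by blast
        with b teval_ge[OF fin a0P, of y] show False unfolding active_def by simp
      qed
    qed
  qed
qed

text \<open>If \<open>teval P\<close> agrees with an affine function \<open>c + v \<bullet> y\<close> near \<open>p\<close>, an active monomial \<open>a\<close>
  satisfies \<open>(v - a) \<bullet> w \<ge> 0\<close> for all small \<open>w\<close>; taking \<open>w\<close> a negative multiple of \<open>v - a\<close>
  forces \<open>a = v\<close>.\<close>
lemma active_singleton_if_notin_Vtr:
  assumes fin: "finite (fst P)" and ne: "fst P \<noteq> {}" and "p \<notin> Vtr P"
  obtains a where "active P p = {a}"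
proof -
  from \<open>p \<notin> Vtr P\<close> obtain e c v where e: "e > 0"
    and affine: "\<And>y. y \<in> ball p e \<Longrightarrow> teval P y = c + v \<bullet> y"
    unfolding Vtr_def by blast
  have "a = v" if a: "a \<in> active P p" for a
  proof -
    have pos: "0 < 2 * (norm (v - a) + 1)" by (smt (verit) norm_ge_zero)
    define s where "s = e / (2 * (norm (v - a) + 1))"
    have s: "s > 0" using e pos by (simp add: s_def)
    have "s * norm (v - a) < s * (2 * (norm (v - a) + 1))"
      using s pos by (intro mult_strict_left_mono) auto
    also have "\<dots> = e" using pos by (simp add: s_def)
    finally have "p - s *\<^sub>R (v - a) \<in> ball p e"
      using s by (simp add: dist_norm)
    then have "snd P a + a \<bullet> (p - s *\<^sub>R (v - a)) \<le> c + v \<bullet> (p - s *\<^sub>R (v - a))"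
      using a teval_ge[OF fin] affine unfolding active_def by (metis (mono_tags, lifting) mem_Collect_eq)
    moreover have "snd P a + a \<bullet> p = c + v \<bullet> p"
      using a affine e unfolding active_def by simp
    ultimately have "s * ((v - a) \<bullet> (v - a)) \<le> 0"
      by (simp add: inner_simps algebra_simps)
    then have "(v - a) \<bullet> (v - a) \<le> 0" using s by (simp add: mult_le_0_iff)
    then show "a = v" by (metis inner_gt_zero_iff linorder_not_less eq_iff_diff_eq_0)
  qed
  then have "active P p \<subseteq> {v}" by blast
  with active_nonempty[OF fin ne] show ?thesis using that by blast
qed

lemma notin_Vtr_if_active_singleton:
  assumes fin: "finite (fst P)" and ne: "fst P \<noteq> {}" and act: "active P p = {a}"
  shows "p \<notin> Vtr P"
proof -
  obtain e where e: "e > 0" and near: "\<And>y. dist y p < e \<Longrightarrow> active P y \<subseteq> {a}"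
    using eventually_active_subset[OF fin ne, of p] act unfolding eventually_nhds_metric by auto
  have "teval P y = snd P a + a \<bullet> y" if "y \<in> ball p e" for y
  proof -
    have "active P y = {a}"
      using near[of y] that active_nonempty[OF fin ne, of y] by (auto simp: dist_commute)
    then show ?thesis unfolding active_def by auto
  qed
  then show ?thesis unfolding Vtr_def using e by blast
qed

lemma dual_dim_nonneg:
  assumes "finite (fst P)" "fst P \<noteq> {}"
  shows "0 \<le> dual_dim P p"
  using active_nonempty[OF assms, of p] aff_dim_geq[of "active P p"] aff_dim_empty[of "active P p"]
  by (simp add: aff_dim_convex_hull)

lemma Vtr_iff_dual_dim:
  assumes fin: "finite (fst P)" and ne: "fst P \<noteq> {}"
  shows "p \<in> Vtr P \<longleftrightarrow> 1 \<le> dual_dim P p"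
proof -
  have "1 \<le> dual_dim P p \<longleftrightarrow> (\<nexists>a. active P p = {a})"
    using dual_dim_nonneg[OF fin ne, of p]
    by (auto simp: aff_dim_convex_hull aff_dim_eq_0[symmetric])
  then show ?thesis
    using active_singleton_if_notin_Vtr[OF fin ne] notin_Vtr_if_active_singleton[OF fin ne]
    by blast
qed

text \<open>A vector \<open>h\<close> orthogonal to the affine span of the active monomials keeps all of them tied
  along \<open>p + t h\<close>, so these points stay in the cell for small \<open>t\<close>.\<close>
lemma cell_of_nontrivial:
  fixes P :: "'m::finite trop"
  assumes fin: "finite (fst P)" and ne: "fst P \<noteq> {}"
    and lt: "dual_dim P p < int CARD('m)"
  obtains y where "y \<in> cell_of P p" "y \<noteq> p"
proof -
  let ?A = "active P p"
  obtain a0 where a0: "a0 \<in> ?A" using active_nonempty[OF fin ne] by blast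
  have "aff_dim ?A = int (dim ((\<lambda>x. x - a0) ` ?A))"
    using a0 by (intro aff_dim_eq_dim_subtract) (simp add: hull_inc)
  with lt have "dim ((\<lambda>x. x - a0) ` ?A) < DIM(real^'m)" by (simp add: aff_dim_convex_hull)
  from orthogonal_to_subspace_exists[OF this] obtain h :: "real^'m" where h0: "h \<noteq> 0"
    and orth: "\<And>z. z \<in> span ((\<lambda>x. x - a0) ` ?A) \<Longrightarrow> orthogonal h z"
    by blast
  have tied: "a \<bullet> h = a0 \<bullet> h" if "a \<in> ?A" for a
  proof -
    have "h \<bullet> (a - a0) = 0"
      using orth[of "a - a0"] that unfolding orthogonal_def by (simp add: span_base)
    then show ?thesis by (simp add: inner_diff_right inner_commute)
  qed
  obtain d where d: "d > 0" and near: "\<And>y. dist y p < d \<Longrightarrow> active P y \<subseteq> ?A"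
    using eventually_active_subset[OF fin ne, of p] unfolding eventually_nhds_metric by blast
  define y where "y = p + (d / (2 * norm h)) *\<^sub>R h"
  have "dist y p = d / 2" using h0 d by (simp add: y_def dist_norm)
  then have sub: "active P y \<subseteq> ?A" using near d by simp
  obtain c where c: "c \<in> active P y" using active_nonempty[OF fin ne] by blast
  have value_y: "snd P a + a \<bullet> y = teval P p + (d / (2 * norm h)) * (a0 \<bullet> h)" if "a \<in> ?A" for a
    using that tied[OF that] unfolding y_def active_def by (simp add: inner_simps)
  have "?A \<subseteq> active P y"
    using c sub value_y unfolding active_def by auto
  then have "y \<in> cell_of P p" unfolding cell_of_def by simp
  moreover have "y \<noteq> p" using h0 d by (simp add: y_def)
  ultimately show ?thesis using that by blast
qed

lemma cell_of_full_dim: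
  fixes P :: "'m::finite trop"
  assumes fin: "finite (fst P)" and ne: "fst P \<noteq> {}"
    and full: "dual_dim P p = int CARD('m)"
  shows "cell_of P p = {p}"
proof -
  let ?A = "active P p"
  obtain a0 where a0: "a0 \<in> ?A" using active_nonempty[OF fin ne] by blast
  have "aff_dim ?A = int (dim ((\<lambda>x. x - a0) ` ?A))"
    using a0 by (intro aff_dim_eq_dim_subtract) (simp add: hull_inc)
  with full have "span ((\<lambda>x. x - a0) ` ?A) = UNIV"
    by (simp add: aff_dim_convex_hull dim_eq_full[symmetric])
  have "y = p" if y: "y \<in> cell_of P p" for y
  proof -
    have orth: "(y - p) \<bullet> z = 0" if "z \<in> (\<lambda>x. x - a0) ` ?A" for z
    proof -
      from that obtain a where a: "a \<in> ?A" and z: "z = a - a0" by blast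
      have "a \<in> active P y" "a0 \<in> active P y"
        using a a0 y unfolding cell_of_def by auto
      with a a0 show ?thesis
        unfolding z active_def by (simp add: inner_simps inner_commute algebra_simps)
    qed
    have "(y - p) \<bullet> z = 0" if "z \<in> span ((\<lambda>x. x - a0) ` ?A)" for z
      using that
    proof (induction rule: span_induct)
      case base
      then show ?case by (auto simp: subspace_def inner_add_right orth)
    qed (use orth in auto)
    then have "(y - p) \<bullet> (y - p) = 0"
      using \<open>span ((\<lambda>x. x - a0) ` ?A) = UNIV\<close> by blast
    then show ?thesis by simp
  qed
  then show ?thesis by auto
qed

lemma cell_of_eq_singleton_iff:
  fixes P :: "'m::finite trop"
  assumes fin: "finite (fst P)" and ne: "fst P \<noteq> {}"
  shows "cell_of P p = {p} \<longleftrightarrow> dual_dim P p = int CARD('m)"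
  using aff_dim_le_DIM[of "convex hull (active P p)"] cell_of_full_dim[OF fin ne]
    cell_of_nontrivial[OF fin ne, of p]
  by (cases "dual_dim P p < int CARD('m)") fastforce+

lemma vertices_of_hyp_cells_iff:
  fixes P :: "'m::finite trop"
  assumes fin: "finite (fst P)" and ne: "fst P \<noteq> {}"
  shows "p \<in> vertices_of (hyp_cells P) \<longleftrightarrow> dual_dim P p = int CARD('m)"
proof -
  have "p \<in> vertices_of (hyp_cells P) \<longleftrightarrow> p \<in> Vtr P \<and> cell_of P p = {p}"
  proof
    assume "p \<in> vertices_of (hyp_cells P)"
    then obtain q where "q \<in> Vtr P" "{p} = cell_of P q"
      unfolding vertices_of_def hyp_cells_def by blast
    moreover from this have "q = p" using self_in_cell_of[of q P] by blast
    ultimately show "p \<in> Vtr P \<and> cell_of P p = {p}" by simp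
  qed (auto simp: vertices_of_def hyp_cells_def)
  then show ?thesis
    using cell_of_eq_singleton_iff[OF fin ne] Vtr_iff_dual_dim[OF fin ne] by auto
qed

lemma vertices_of_int_cells_iff:
  "p \<in> vertices_of (int_cells F J) \<longleftrightarrow>
     p \<in> (\<Inter>i\<in>J. Vtr (F i)) \<and> (\<Inter>i\<in>J. cell_of (F i) p) = {p}"
proof
  assume "p \<in> vertices_of (int_cells F J)"
  then obtain q where q: "q \<in> (\<Inter>i\<in>J. Vtr (F i))" "{p} = (\<Inter>i\<in>J. cell_of (F i) q)"
    unfolding vertices_of_def int_cells_def by blast
  moreover have "q \<in> (\<Inter>i\<in>J. cell_of (F i) q)" by simp
  ultimately have "q = p" by blast
  with q show "p \<in> (\<Inter>i\<in>J. Vtr (F i)) \<and> (\<Inter>i\<in>J. cell_of (F i) p) = {p}" by simp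
qed (auto simp: vertices_of_def int_cells_def)

definition minkowski_sum :: "'i set \<Rightarrow> ('i \<Rightarrow> 'a::comm_monoid_add set) \<Rightarrow> 'a set" where
  "minkowski_sum J A = (\<lambda>x. \<Sum>i\<in>J. x i) ` (\<Pi>\<^sub>E i\<in>J. A i)"

lemma minkowski_sum_empty [simp]: "minkowski_sum {} A = {0}"
  by (simp add: minkowski_sum_def)

lemma minkowski_sum_singleton [simp]: "minkowski_sum {k} A = A k"
proof
  show "minkowski_sum {k} A \<subseteq> A k" by (auto simp: minkowski_sum_def PiE_iff)
  show "A k \<subseteq> minkowski_sum {k} A"
  proof
    fix a assume "a \<in> A k"
    then have "(\<lambda>i. if i = k then a else undefined) \<in> (\<Pi>\<^sub>E i\<in>{k}. A i)"
      by (auto simp: PiE_iff extensional_def)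
    then show "a \<in> minkowski_sum {k} A"
      unfolding minkowski_sum_def by (rule rev_image_eqI) simp
  qed
qed

lemma minkowski_sum_translate:
  assumes J: "finite J" and K: "K \<subseteq> J" and single: "\<And>i. i \<in> J - K \<Longrightarrow> A i = {c i}"
  shows "minkowski_sum J A = (+) (\<Sum>i\<in>J - K. c i) ` minkowski_sum K A"
proof -
  have split: "(\<Sum>i\<in>J. x i) = (\<Sum>i\<in>J - K. x i) + (\<Sum>i\<in>K. x i)" for x :: "'a \<Rightarrow> 'b"
    by (rule sum.subset_diff[OF K J])
  show ?thesis
  proof
    show "minkowski_sum J A \<subseteq> (+) (\<Sum>i\<in>J - K. c i) ` minkowski_sum K A"
    proof
      fix b assume "b \<in> minkowski_sum J A"
      then obtain x where x: "x \<in> (\<Pi>\<^sub>E i\<in>J. A i)" and b: "b = (\<Sum>i\<in>J. x i)"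
        unfolding minkowski_sum_def by blast
      have outside: "(\<Sum>i\<in>J - K. x i) = (\<Sum>i\<in>J - K. c i)"
        using x single by (intro sum.cong) (auto simp: PiE_iff)
      have "(\<Sum>i\<in>K. x i) \<in> minkowski_sum K A"
        unfolding minkowski_sum_def using x K
        by (intro image_eqI[where x = "restrict x K"]) (auto simp: PiE_iff)
      then show "b \<in> (+) (\<Sum>i\<in>J - K. c i) ` minkowski_sum K A"
        unfolding b split outside by (rule imageI)
    qed
  next
    show "(+) (\<Sum>i\<in>J - K. c i) ` minkowski_sum K A \<subseteq> minkowski_sum J A"
    proof clarify
      fix b assume "b \<in> minkowski_sum K A"
      then obtain x where x: "x \<in> (\<Pi>\<^sub>E i\<in>K. A i)" and b: "b = (\<Sum>i\<in>K. x i)"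
        unfolding minkowski_sum_def by blast
      define z where "z i = (if i \<in> K then x i else if i \<in> J then c i else undefined)" for i
      have "z \<in> (\<Pi>\<^sub>E i\<in>J. A i)"
        using x K single unfolding z_def by (auto simp: PiE_iff extensional_def)
      moreover have "(\<Sum>i\<in>J. z i) = (\<Sum>i\<in>J - K. c i) + b"
        unfolding split b by (intro arg_cong2[where f="(+)"] sum.cong) (auto simp: z_def)
      ultimately show "(\<Sum>i\<in>J - K. c i) + b \<in> minkowski_sum J A"
        unfolding minkowski_sum_def by (metis image_eqI)
    qed
  qed
qed

locale trop_product =
  fixes F :: "nat \<Rightarrow> 'm::finite trop" and J :: "nat set"
  assumes finite_index: "finite J"
    and finite_factor: "\<And>i. i \<in> J \<Longrightarrow> finite (fst (F i))"
    and factor_nonempty: "\<And>i. i \<in> J \<Longrightarrow> fst (F i) \<noteq> {}"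
begin

lemma fst_tprod: "fst (tprod F J) = minkowski_sum J (\<lambda>i. fst (F i))"
  by (simp add: tprod_def minkowski_sum_def)

lemma snd_tprod: "snd (tprod F J) b =
    Max ((\<lambda>x. \<Sum>i\<in>J. snd (F i) (x i)) ` {x \<in> (\<Pi>\<^sub>E i\<in>J. fst (F i)). (\<Sum>i\<in>J. x i) = b})"
  by (simp add: tprod_def)

lemma finite_exponent_choices: "finite (\<Pi>\<^sub>E i\<in>J. fst (F i))"
  using finite_index finite_factor by (intro finite_PiE) auto

lemma finite_tprod: "finite (fst (tprod F J))"
  unfolding fst_tprod minkowski_sum_def using finite_exponent_choices by simp

lemma tprod_nonempty: "fst (tprod F J) \<noteq> {}"
  unfolding fst_tprod minkowski_sum_def using factor_nonempty by (simp add: PiE_eq_empty_iff)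

lemma coeff_tprod_ge:
  assumes "x \<in> (\<Pi>\<^sub>E i\<in>J. fst (F i))"
  shows "(\<Sum>i\<in>J. snd (F i) (x i)) \<le> snd (tprod F J) (\<Sum>i\<in>J. x i)"
  unfolding snd_tprod using assms finite_exponent_choices by (intro Max_ge) auto

lemma coeff_tprod_attained:
  assumes "b \<in> fst (tprod F J)"
  obtains x where "x \<in> (\<Pi>\<^sub>E i\<in>J. fst (F i))" "(\<Sum>i\<in>J. x i) = b"
    "snd (tprod F J) b = (\<Sum>i\<in>J. snd (F i) (x i))"
proof -
  have "snd (tprod F J) b \<in>
      (\<lambda>x. \<Sum>i\<in>J. snd (F i) (x i)) ` {x \<in> (\<Pi>\<^sub>E i\<in>J. fst (F i)). (\<Sum>i\<in>J. x i) = b}"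
    unfolding snd_tprod using assms finite_exponent_choices
    by (intro Max_in) (auto simp: fst_tprod minkowski_sum_def)
  with that show ?thesis by blast
qed

lemma monomial_value_sum:
  "(\<Sum>i\<in>J. snd (F i) (x i)) + (\<Sum>i\<in>J. x i) \<bullet> y = (\<Sum>i\<in>J. snd (F i) (x i) + x i \<bullet> y)"
  by (simp add: inner_sum_left sum.distrib)

lemma active_choices_nonempty: "(\<Pi>\<^sub>E i\<in>J. active (F i) y) \<noteq> {}"
  using active_nonempty[OF finite_factor factor_nonempty] by (auto simp: PiE_eq_empty_iff)

lemma active_choice_in_exponents:
  "x \<in> (\<Pi>\<^sub>E i\<in>J. active (F i) y) \<Longrightarrow> x \<in> (\<Pi>\<^sub>E i\<in>J. fst (F i))"
  by (auto simp: PiE_iff active_def)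

lemma teval_tprod: "teval (tprod F J) y = (\<Sum>i\<in>J. teval (F i) y)"
proof (rule antisym)
  obtain b where b: "b \<in> fst (tprod F J)" "teval (tprod F J) y = snd (tprod F J) b + b \<bullet> y"
    using teval_attained[OF finite_tprod tprod_nonempty] .
  then obtain x where x: "x \<in> (\<Pi>\<^sub>E i\<in>J. fst (F i))" "(\<Sum>i\<in>J. x i) = b"
    "snd (tprod F J) b = (\<Sum>i\<in>J. snd (F i) (x i))"
    using coeff_tprod_attained by blast
  have "teval (tprod F J) y = (\<Sum>i\<in>J. snd (F i) (x i) + x i \<bullet> y)"
    using b(2) x(3) monomial_value_sum[of x y] by (simp add: x(2)[symmetric])
  also have "\<dots> \<le> (\<Sum>i\<in>J. teval (F i) y)"
    using x(1) by (intro sum_mono teval_ge finite_factor) (auto simp: PiE_iff)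
  finally show "teval (tprod F J) y \<le> (\<Sum>i\<in>J. teval (F i) y)" .
next
  obtain x where x: "x \<in> (\<Pi>\<^sub>E i\<in>J. active (F i) y)" using active_choices_nonempty by blast
  have "(\<Sum>i\<in>J. teval (F i) y) = (\<Sum>i\<in>J. snd (F i) (x i) + x i \<bullet> y)"
    using x unfolding active_def by (intro sum.cong) (auto simp: PiE_iff)
  also have "\<dots> \<le> snd (tprod F J) (\<Sum>i\<in>J. x i) + (\<Sum>i\<in>J. x i) \<bullet> y"
    using coeff_tprod_ge[OF active_choice_in_exponents[OF x]] monomial_value_sum[of x y] by linarith
  also have "\<dots> \<le> teval (tprod F J) y"
    using active_choice_in_exponents[OF x] by (intro teval_ge finite_tprod) (auto simp: fst_tprod minkowski_sum_def)
  finally show "(\<Sum>i\<in>J. teval (F i) y) \<le> teval (tprod F J) y" .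
qed

text \<open>A decomposition realising the coefficient of an active monomial of the product consists of
  active monomials: the values add up to \<open>\<Sum>i\<in>J. teval (F i) y\<close> and none exceeds its bound.\<close>
lemma active_components:
  assumes x: "x \<in> (\<Pi>\<^sub>E i\<in>J. fst (F i))" and active: "(\<Sum>i\<in>J. x i) \<in> active (tprod F J) y"
    and coeff: "snd (tprod F J) (\<Sum>i\<in>J. x i) = (\<Sum>i\<in>J. snd (F i) (x i))"
  shows "x \<in> (\<Pi>\<^sub>E i\<in>J. active (F i) y)"
proof -
  have le: "snd (F i) (x i) + x i \<bullet> y \<le> teval (F i) y" if "i \<in> J" for i
    using x that by (intro teval_ge finite_factor) (auto simp: PiE_iff)
  have "(\<Sum>i\<in>J. snd (F i) (x i) + x i \<bullet> y) = (\<Sum>i\<in>J. teval (F i) y)"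
    using active coeff monomial_value_sum[of x y] teval_tprod unfolding active_def by simp
  then have "snd (F i) (x i) + x i \<bullet> y = teval (F i) y" if "i \<in> J" for i
    using le that finite_index
    by (rule sum_mono_inv[where f = "\<lambda>i. snd (F i) (x i) + x i \<bullet> y" and g = "\<lambda>i. teval (F i) y"])
  with x show ?thesis unfolding active_def by (auto simp: PiE_iff)
qed

lemma coeff_tprod_of_active:
  assumes x: "x \<in> (\<Pi>\<^sub>E i\<in>J. active (F i) y)"
  shows "snd (tprod F J) (\<Sum>i\<in>J. x i) = (\<Sum>i\<in>J. snd (F i) (x i))"
proof (rule antisym)
  have xF: "x \<in> (\<Pi>\<^sub>E i\<in>J. fst (F i))" by (rule active_choice_in_exponents[OF x])
  have "snd (tprod F J) (\<Sum>i\<in>J. x i) + (\<Sum>i\<in>J. x i) \<bullet> y \<le> teval (tprod F J) y"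
    using xF by (intro teval_ge finite_tprod) (auto simp: fst_tprod minkowski_sum_def)
  also have "\<dots> = (\<Sum>i\<in>J. snd (F i) (x i) + x i \<bullet> y)"
    unfolding teval_tprod using x unfolding active_def by (intro sum.cong) (auto simp: PiE_iff)
  finally show "snd (tprod F J) (\<Sum>i\<in>J. x i) \<le> (\<Sum>i\<in>J. snd (F i) (x i))"
    using monomial_value_sum[of x y] by linarith
qed (rule coeff_tprod_ge[OF active_choice_in_exponents[OF x]])

lemma active_tprod: "active (tprod F J) y = minkowski_sum J (\<lambda>i. active (F i) y)"
proof
  show "active (tprod F J) y \<subseteq> minkowski_sum J (\<lambda>i. active (F i) y)"
  proof
    fix b assume b: "b \<in> active (tprod F J) y"
    then obtain x where "x \<in> (\<Pi>\<^sub>E i\<in>J. fst (F i))" "(\<Sum>i\<in>J. x i) = b"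
      "snd (tprod F J) b = (\<Sum>i\<in>J. snd (F i) (x i))"
      using coeff_tprod_attained unfolding active_def by blast
    with b active_components show "b \<in> minkowski_sum J (\<lambda>i. active (F i) y)"
      unfolding minkowski_sum_def by blast
  qed
next
  show "minkowski_sum J (\<lambda>i. active (F i) y) \<subseteq> active (tprod F J) y"
  proof
    fix b assume "b \<in> minkowski_sum J (\<lambda>i. active (F i) y)"
    then obtain x where x: "x \<in> (\<Pi>\<^sub>E i\<in>J. active (F i) y)" and b: "b = (\<Sum>i\<in>J. x i)"
      unfolding minkowski_sum_def by blast
    have "snd (tprod F J) b + b \<bullet> y = (\<Sum>i\<in>J. snd (F i) (x i) + x i \<bullet> y)"
      using coeff_tprod_of_active[OF x] monomial_value_sum b by simp
    also have "\<dots> = teval (tprod F J) y"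
      unfolding teval_tprod using x unfolding active_def by (intro sum.cong) (auto simp: PiE_iff)
    finally show "b \<in> active (tprod F J) y"
      using active_choice_in_exponents[OF x] b unfolding active_def fst_tprod minkowski_sum_def by auto
  qed
qed

lemma cell_of_tprod: "cell_of (tprod F J) p = (\<Inter>i\<in>J. cell_of (F i) p)"
proof
  show "(\<Inter>i\<in>J. cell_of (F i) p) \<subseteq> cell_of (tprod F J) p"
    unfolding cell_of_def active_tprod minkowski_sum_def
    by (auto intro!: image_mono PiE_mono)
next
  show "cell_of (tprod F J) p \<subseteq> (\<Inter>i\<in>J. cell_of (F i) p)"
  proof (intro subsetI INT_I)
    fix y k assume y: "y \<in> cell_of (tprod F J) p" and k: "k \<in> J"
    show "y \<in> cell_of (F k) p" unfolding cell_of_def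
    proof (intro CollectI subsetI)
      fix a assume a: "a \<in> active (F k) p"
      obtain x0 where x0: "x0 \<in> (\<Pi>\<^sub>E i\<in>J. active (F i) p)" using active_choices_nonempty by blast
      define x where "x = x0(k := a)"
      have x: "x \<in> (\<Pi>\<^sub>E i\<in>J. active (F i) p)"
        using x0 a k unfolding x_def by (auto simp: PiE_iff extensional_def)
      have "(\<Sum>i\<in>J. x i) \<in> active (tprod F J) y"
        using x y unfolding cell_of_def active_tprod minkowski_sum_def by blast
      then have "x \<in> (\<Pi>\<^sub>E i\<in>J. active (F i) y)"
        using active_components[OF active_choice_in_exponents[OF x]] coeff_tprod_of_active[OF x]
        by blast
      then show "a \<in> active (F k) y" using k by (auto simp: x_def PiE_iff)
    qed
  qed
qed

lemma trop_product_subset: "K \<subseteq> J \<Longrightarrow> trop_product F K"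
  using finite_index finite_factor factor_nonempty by unfold_locales (auto intro: finite_subset)

text \<open>Factors with a single active monomial only translate the Minkowski sum.\<close>
lemma dual_dim_tprod_drop_singletons:
  assumes K: "K \<subseteq> J" and single: "\<And>i. i \<in> J - K \<Longrightarrow> active (F i) p = {c i}"
  shows "dual_dim (tprod F J) p = dual_dim (tprod F K) p"
proof -
  interpret K: trop_product F K using K by (rule trop_product_subset)
  have "active (tprod F J) p = (+) (\<Sum>i\<in>J - K. c i) ` active (tprod F K) p"
    unfolding active_tprod K.active_tprod using finite_index K single by (rule minkowski_sum_translate)
  then show ?thesis by (simp add: convex_hull_translation aff_dim_translation_eq)
qed

end

lemma sum_subset_eq_bound_iff:
  fixes d :: "'i \<Rightarrow> int"
  assumes N: "finite N" and J: "J \<subseteq> N" and nonneg: "\<And>i. i \<in> N \<Longrightarrow> 0 \<le> d i"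
    and bound: "sum d N \<le> m"
  shows "sum d J = m \<longleftrightarrow> sum d N = m \<and> {i \<in> N. d i \<noteq> 0} \<subseteq> J"
proof -
  have split: "sum d N = sum d J + sum d (N - J)"
    using sum.subset_diff[OF J N] by (simp add: add.commute)
  have "0 \<le> sum d (N - J)" using nonneg by (intro sum_nonneg) auto
  moreover have "sum d (N - J) = 0 \<longleftrightarrow> {i \<in> N. d i \<noteq> 0} \<subseteq> J"
    using sum_nonneg_eq_0_iff[of "N - J" d] N nonneg by auto
  ultimately show ?thesis using split bound by auto
qed

locale transversal_family =
  fixes F :: "nat \<Rightarrow> 'm::finite trop" and n :: nat
  assumes transversal: "transversal F n"
    and finite_support: "\<And>i. i \<in> {1..n} \<Longrightarrow> finite (fst (F i))"
    and support_nonempty: "\<And>i. i \<in> {1..n} \<Longrightarrow> fst (F i) \<noteq> {}"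
begin

lemma trop_product_of_subset: "J \<subseteq> {1..n} \<Longrightarrow> trop_product F J"
  using finite_support support_nonempty by unfold_locales (auto intro: finite_subset)

text \<open>Transversality is only imposed at points of \<open>I\<^sub>J\<close>; elsewhere the factors with
  \<open>p \<notin> X\<^sub>i\<close> have dual dimension \<open>0\<close> and can be dropped.\<close>
lemma dual_dim_tprod_eq_sum:
  assumes J: "J \<subseteq> {1..n}"
  shows "dual_dim (tprod F J) p = (\<Sum>i\<in>J. dual_dim (F i) p)"
proof -
  interpret trop_product F J using J by (rule trop_product_of_subset)
  define K where "K = {i \<in> J. p \<in> Vtr (F i)}"
  have KJ: "K \<subseteq> J" unfolding K_def by blast
  have "\<exists>a. active (F i) p = {a}" if "i \<in> J - K" for i
  proof -
    have "i \<in> {1..n}" "p \<notin> Vtr (F i)" using that J unfolding K_def by auto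
    then show ?thesis using finite_support support_nonempty active_singleton_if_notin_Vtr by metis
  qed
  then obtain c where c: "\<And>i. i \<in> J - K \<Longrightarrow> active (F i) p = {c i}" by metis
  interpret K: trop_product F K using KJ by (rule trop_product_subset)
  have "dual_dim (tprod F J) p = dual_dim (tprod F K) p"
    using KJ c by (rule dual_dim_tprod_drop_singletons)
  also have "\<dots> = (\<Sum>i\<in>K. dual_dim (F i) p)"
  proof -
    have "card K = 0 \<or> card K = 1 \<or> 2 \<le> card K" by linarith
    then consider "K = {}" | k where "K = {k}" | "2 \<le> card K"
      using K.finite_index card_1_singleton_iff[of K] by auto
    then show ?thesis
    proof cases
      case 1
      then show ?thesis using K.active_tprod[of p] by simp
    next
      case (2 k)
      then show ?thesis using K.active_tprod[of p] by simp
    next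
      case 3
      moreover have "K \<subseteq> {1..n}" "p \<in> (\<Inter>i\<in>K. Vtr (F i))"
        using KJ J unfolding K_def by auto
      ultimately show ?thesis using transversal unfolding transversal_def by blast
    qed
  qed
  also have "\<dots> = (\<Sum>i\<in>J. dual_dim (F i) p)"
    using finite_index KJ c by (intro sum.mono_neutral_left) auto
  finally show ?thesis .
qed

lemma Vtr_iff_dual_dim_nonzero: "i \<in> {1..n} \<Longrightarrow> p \<in> Vtr (F i) \<longleftrightarrow> dual_dim (F i) p \<noteq> 0"
  using Vtr_iff_dual_dim[of "F i" p] dual_dim_nonneg[of "F i" p] finite_support support_nonempty
  by fastforce

lemma dual_dim_factor_nonneg: "i \<in> {1..n} \<Longrightarrow> 0 \<le> dual_dim (F i) p"
  using dual_dim_nonneg finite_support support_nonempty by blast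

lemma sum_dual_dim_le: "(\<Sum>i\<in>{1..n}. dual_dim (F i) p) \<le> int CARD('m)"
  using dual_dim_tprod_eq_sum[of "{1..n}" p] aff_dim_le_DIM[of "convex hull (active (tprod F {1..n}) p)"]
  by simp

lemma vertices_of_union_iff:
  assumes J: "J \<subseteq> {1..n}"
  shows "p \<in> vertices_of (hyp_cells (tprod F J)) \<longleftrightarrow>
    (\<Sum>i\<in>{1..n}. dual_dim (F i) p) = int CARD('m) \<and> {i \<in> {1..n}. p \<in> Vtr (F i)} \<subseteq> J"
proof -
  interpret trop_product F J using J by (rule trop_product_of_subset)
  have "p \<in> vertices_of (hyp_cells (tprod F J)) \<longleftrightarrow> (\<Sum>i\<in>J. dual_dim (F i) p) = int CARD('m)"
    using vertices_of_hyp_cells_iff[OF finite_tprod tprod_nonempty] dual_dim_tprod_eq_sum[OF J] by simp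
  also have "\<dots> \<longleftrightarrow> (\<Sum>i\<in>{1..n}. dual_dim (F i) p) = int CARD('m)
      \<and> {i \<in> {1..n}. dual_dim (F i) p \<noteq> 0} \<subseteq> J"
    using J dual_dim_factor_nonneg sum_dual_dim_le by (intro sum_subset_eq_bound_iff) auto
  also have "{i \<in> {1..n}. dual_dim (F i) p \<noteq> 0} = {i \<in> {1..n}. p \<in> Vtr (F i)}"
    using Vtr_iff_dual_dim_nonzero by blast
  finally show ?thesis .
qed

lemma vertices_of_intersection_iff:
  "p \<in> vertices_of (int_cells F {1..n}) \<longleftrightarrow>
    (\<Sum>i\<in>{1..n}. dual_dim (F i) p) = int CARD('m) \<and> {i \<in> {1..n}. p \<in> Vtr (F i)} = {1..n}"
proof -
  interpret trop_product F "{1..n}" using trop_product_of_subset by simp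
  have "p \<in> vertices_of (int_cells F {1..n})
      \<longleftrightarrow> p \<in> (\<Inter>i\<in>{1..n}. Vtr (F i)) \<and> cell_of (tprod F {1..n}) p = {p}"
    unfolding vertices_of_int_cells_iff cell_of_tprod ..
  then show ?thesis
    using cell_of_eq_singleton_iff[OF finite_tprod tprod_nonempty] dual_dim_tprod_eq_sum[of "{1..n}" p]
    by auto
qed

lemma Vtr_nonempty_if_full_dual_dim:
  assumes "(\<Sum>i\<in>{1..n}. dual_dim (F i) p) = int CARD('m)"
  shows "{i \<in> {1..n}. p \<in> Vtr (F i)} \<noteq> {}"
proof
  assume "{i \<in> {1..n}. p \<in> Vtr (F i)} = {}"
  then have "(\<Sum>i\<in>{1..n}. dual_dim (F i) p) = 0" using Vtr_iff_dual_dim_nonzero by simp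
  with assms show False by simp
qed

end

lemma card_supersets_parity_swap:
  assumes N: "finite N" and r: "r \<in> N" "r \<notin> S"
  shows "card {J. S \<subseteq> J \<and> J \<subseteq> N \<and> card J mod 2 = k mod 2}
       = card {J. S \<subseteq> J \<and> J \<subseteq> N \<and> card J mod 2 = Suc k mod 2}"
proof -
  define toggle where "toggle J = (if r \<in> J then J - {r} else insert r J)" for J
  define A where "A j = {J. S \<subseteq> J \<and> J \<subseteq> N \<and> card J mod 2 = j mod 2}" for j
  have involution: "toggle (toggle J) = J" for J by (auto simp: toggle_def)
  have maps: "toggle ` A j \<subseteq> A (Suc j)" for j
  proof clarify
    fix J assume J: "J \<in> A j"
    then have "finite J" using N by (auto simp: A_def intro: finite_subset)
    then have "card (toggle J) mod 2 = Suc (card J) mod 2"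
      by (cases "card J") (auto simp: toggle_def card_gt_0_iff mod_Suc)
    with J r show "toggle J \<in> A (Suc j)" by (auto simp: A_def toggle_def mod_Suc)
  qed
  have "A (Suc (Suc k)) = A k" by (simp add: A_def mod_Suc)
  then have "bij_betw toggle (A k) (A (Suc k))"
    using maps[of k] maps[of "Suc k"] involution by (intro bij_betw_byWitness) auto
  then show ?thesis unfolding A_def by (rule bij_betw_same_card)
qed

text \<open>In the application \<open>V J\<close> means that \<open>p\<close> is a vertex of \<open>U\<^sub>J\<close>, \<open>VI\<close> that it is a
  vertex of \<open>I\<close>, and \<open>S\<close> is the set of hypersurfaces through \<open>p\<close>.\<close>
lemma alternating_superset_count:
  fixes V :: "'i set \<Rightarrow> bool"
  assumes N: "finite N" "card N = n" and S: "S \<subseteq> N" "c \<Longrightarrow> S \<noteq> {}"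
    and V: "\<And>J. J \<subseteq> N \<Longrightarrow> V J \<longleftrightarrow> c \<and> S \<subseteq> J" and VI: "VI \<longleftrightarrow> c \<and> S = N"
  shows "(if VI then 1 else 0)
           + card {J. J \<subseteq> N \<and> 1 \<le> card J \<and> card J \<le> n - 1 \<and> card J mod 2 = (n - 1) mod 2 \<and> V J}
         = (if V N then 1 else (0::nat))
           + card {J. J \<subseteq> N \<and> 1 \<le> card J \<and> card J \<le> n - 2 \<and> card J mod 2 = n mod 2 \<and> V J}"
proof (cases c)
  case False
  then have "J \<subseteq> N \<Longrightarrow> V J = False" for J using V by blast
  with False VI show ?thesis by (simp cong: conj_cong)
next
  case True
  define sup where "sup j = {J. S \<subseteq> J \<and> J \<subseteq> N \<and> card J mod 2 = j mod 2}" for j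
  define R where "R = {J. J \<subseteq> N \<and> 1 \<le> card J \<and> card J \<le> n - 2 \<and> card J mod 2 = n mod 2 \<and> V J}"
  have "S \<noteq> {}" using S(2) True .
  then have size: "1 \<le> card J" "card J \<le> n" if "S \<subseteq> J" "J \<subseteq> N" for J
    using that N card_mono[OF N(1)] by (auto simp: Suc_le_eq card_gt_0_iff intro: finite_subset)
  have "1 \<le> n" using size[OF S(1) order_refl] by simp
  then have parity: "(n - 1) mod 2 \<noteq> n mod 2" by (cases n) (auto simp: mod_Suc)
  have left: "{J. J \<subseteq> N \<and> 1 \<le> card J \<and> card J \<le> n - 1 \<and> card J mod 2 = (n - 1) mod 2 \<and> V J}
      = sup (n - 1)"
  proof -
    have "card J \<le> n - 1" if "card J \<le> n" "card J mod 2 = (n - 1) mod 2" for J :: "'i set"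
      using that parity by (cases "card J = n") auto
    then show ?thesis using V True size unfolding sup_def by auto
  qed
  have right: "sup n = insert N R"
  proof
    have "card J \<le> n - 2" if "J \<subseteq> N" "J \<noteq> N" "card J mod 2 = n mod 2" for J
    proof -
      have "card J \<noteq> n" using that N card_subset_eq by metis
      moreover have "card J \<noteq> n - 1" using that(3) parity by auto
      ultimately show ?thesis using card_mono[OF N(1) that(1)] N(2) by linarith
    qed
    then show "sup n \<subseteq> insert N R" using V True size unfolding sup_def R_def by auto
    show "insert N R \<subseteq> sup n" using V S(1) N(2) unfolding sup_def R_def by auto
  qed
  have "N \<notin> R" using N(2) \<open>1 \<le> n\<close> unfolding R_def by auto
  moreover have "finite R" using N(1) unfolding R_def by (auto intro: finite_subset[of _ "Pow N"])
  ultimately have card_sup_n: "card (sup n) = Suc (card R)" unfolding right by simp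
  have "card (sup n) = (if S = N then 1 else 0) + card (sup (n - 1))"
  proof (cases "S = N")
    case True
    then have "sup n = {N}" "sup (n - 1) = {}"
      using N(2) parity unfolding sup_def by auto
    with True show ?thesis by simp
  next
    case False
    then obtain r where "r \<in> N" "r \<notin> S" using S(1) by blast
    from card_supersets_parity_swap[OF N(1) this, of "n - 1"]
    show ?thesis using False \<open>1 \<le> n\<close> unfolding sup_def by simp
  qed
  then show ?thesis
    using True VI V[of N] S(1) card_sup_n unfolding left R_def[symmetric] by simp
qed

theorem lemma3p4:
  fixes F :: "nat \<Rightarrow> 'm::finite trop" and n :: nat and p :: "real^'m"
  assumes "2 \<le> n" and "n \<le> CARD('m)"
    and "\<And>i. i \<in> {1..n} \<Longrightarrow> is_trop (F i)"
    and "\<And>i. i \<in> {1..n} \<Longrightarrow> smooth_trop (F i)"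
    and "transversal F n"
  shows "(if p \<in> vertices_of (int_cells F {1..n}) then 1 else 0)
           + card {J. J \<subseteq> {1..n} \<and> 1 \<le> card J \<and> card J \<le> n - 1 \<and> card J mod 2 = (n - 1) mod 2
                     \<and> p \<in> vertices_of (hyp_cells (tprod F J))}
         = (if p \<in> vertices_of (hyp_cells (tprod F {1..n})) then 1 else (0::nat))
           + card {J. J \<subseteq> {1..n} \<and> 1 \<le> card J \<and> card J \<le> n - 2 \<and> card J mod 2 = n mod 2
                     \<and> p \<in> vertices_of (hyp_cells (tprod F J))}"
proof -
  interpret transversal_family F n
    using assms(3,5) by unfold_locales (auto simp: is_trop_def)
  show ?thesis
  proof (rule alternating_superset_count[where V = "\<lambda>J. p \<in> vertices_of (hyp_cells (tprod F J))"])
    show "J \<subseteq> {1..n} \<Longrightarrow> p \<in> vertices_of (hyp_cells (tprod F J)) \<longleftrightarrow>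
        (\<Sum>i\<in>{1..n}. dual_dim (F i) p) = int CARD('m) \<and> {i \<in> {1..n}. p \<in> Vtr (F i)} \<subseteq> J" for J
      by (rule vertices_of_union_iff)
  qed (simp_all only: vertices_of_intersection_iff Vtr_nonempty_if_full_dual_dim finite_atLeastAtMost
    card_atLeastAtMost Collect_subset not_False_eq_True)
qed

end
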